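(* Let $K:\ell^2\to\mathcal{H}$ be a bounded linear operator into a real Hilbert space $\mathcal{H}$, $f\in\mathcal{H}$, $w=(w_k)$ with $w_k\ge w_0>0$, and $\gamma>0$. The mapping $\mathcal{F}:\ell^2\to\ell^2$, $\mathcal{F}(u)=u-\mathcal{S}_{\gamma w}(u-\gamma K^*(Ku-f))$, is Newton differentiable. With $\mathcal{A}=\mathcal{A}(u)=\{k: |u-\gamma K^*(Ku-f)|_k>\gamma w_k\}$, $\mathcal{I}=\mathcal{I}(u)=\mathbb{N}\setminus\mathcal{A}$, and $K^*K$ split into blocks $\mathcal{M}_{\mathcal{A}\mathcal{A}},\mathcal{M}_{\mathcal{A}\mathcal{I}},\mathcal{M}_{\mathcal{I}\mathcal{A}},\mathcal{M}_{\mathcal{I}\mathcal{I}}$ according to these index sets, a generalized derivative is given by $$\mathcal{G}(u)=\begin{pmatrix}\gamma\mathcal{M}_{\mathcal{A}\mathcal{A}} & \gamma\mathcal{M}_{\mathcal{A}\mathcal{I}}\\ 0 & I_{\mathcal{I}}\end{pmatrix},$$ i.e. $\mathcal{G}(u)=(I-P_{\mathcal{A}})+\gamma P_{\mathcal{A}}K^*K$, where $P_{\mathcal{A}}$ is the coordinate projection onto the indices in $\mathcal{A}$.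
   Context: $K^*$ is the Hilbert space adjoint of $K$; $|x|_k$ means $|x_k|$. For a positive sequence $v$, $\mathcal{S}_v(u)_k=\max\{0,|u_k|-v_k\}\,\mathrm{sgn}(u_k)$, and $\gamma w=(\gamma w_k)$. A mapping $\mathcal{F}:X\to Y$ between Banach spaces is Newton differentiable at $x$ with generalized derivative $\mathcal{G}:X\to L(X,Y)$ if $\lim_{h\to0}\|\mathcal{F}(x+h)-\mathcal{F}(x)-\mathcal{G}(x+h)h\|_Y/\|h\|_X=0$; it is Newton differentiable if this holds at every point. For index sets $\mathcal{B},\mathcal{C}\subset\mathbb{N}$, $\mathcal{M}_{\mathcal{B}\mathcal{C}}=P_{\mathcal{B}}K^*K|_{\ell^2(\mathcal{C})}$, viewed as an operator from sequences supported on $\mathcal{C}$ to sequences supported on $\mathcal{B}$. *)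

theory Defs
  imports "HOL-Analysis.Analysis"
begin

definition l2 :: "(nat \<Rightarrow> real) set" where
  "l2 = {x. summable (\<lambda>k. (x k)\<^sup>2)}"

definition l2norm :: "(nat \<Rightarrow> real) \<Rightarrow> real" where
  "l2norm x = sqrt (\<Sum>k. (x k)\<^sup>2)"

definition bounded_linear_from_l2 :: "((nat \<Rightarrow> real) \<Rightarrow> 'h::real_normed_vector) \<Rightarrow> bool" where
  "bounded_linear_from_l2 T \<longleftrightarrow>
     (\<forall>x\<in>l2. \<forall>y\<in>l2. T (\<lambda>k. x k + y k) = T x + T y) \<and>
     (\<forall>c. \<forall>x\<in>l2. T (\<lambda>k. c * x k) = c *\<^sub>R T x) \<and>
     (\<exists>C. \<forall>x\<in>l2. norm (T x) \<le> C * l2norm x)"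

definition bounded_linear_l2 :: "((nat \<Rightarrow> real) \<Rightarrow> (nat \<Rightarrow> real)) \<Rightarrow> bool" where
  "bounded_linear_l2 T \<longleftrightarrow>
     (\<forall>x\<in>l2. T x \<in> l2) \<and>
     (\<forall>x\<in>l2. \<forall>y\<in>l2. T (\<lambda>k. x k + y k) = (\<lambda>k. T x k + T y k)) \<and>
     (\<forall>c. \<forall>x\<in>l2. T (\<lambda>k. c * x k) = (\<lambda>k. c * T x k)) \<and>
     (\<exists>C. \<forall>x\<in>l2. l2norm (T x) \<le> C * l2norm x)"

definition is_adjoint_l2 ::
  "((nat \<Rightarrow> real) \<Rightarrow> 'h::real_inner) \<Rightarrow> ('h \<Rightarrow> (nat \<Rightarrow> real)) \<Rightarrow> bool" where
  "is_adjoint_l2 K Kstar \<longleftrightarrow>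
     (\<forall>y. Kstar y \<in> l2) \<and>
     (\<forall>x\<in>l2. \<forall>y. inner (K x) y = (\<Sum>k. x k * Kstar y k))"

definition newton_differentiable_l2 ::
  "((nat \<Rightarrow> real) \<Rightarrow> (nat \<Rightarrow> real)) \<Rightarrow> ((nat \<Rightarrow> real) \<Rightarrow> (nat \<Rightarrow> real) \<Rightarrow> (nat \<Rightarrow> real)) \<Rightarrow> bool" where
  "newton_differentiable_l2 F G \<longleftrightarrow>
     (\<forall>u\<in>l2. F u \<in> l2) \<and>
     (\<forall>v\<in>l2. bounded_linear_l2 (G v)) \<and>
     (\<forall>u\<in>l2. \<forall>\<epsilon>>0. \<exists>\<delta>>0. \<forall>h\<in>l2. 0 < l2norm h \<and> l2norm h < \<delta> \<longrightarrow>
        l2norm (\<lambda>k. F (\<lambda>j. u j + h j) k - F u k - G (\<lambda>j. u j + h j) h k) \<le> \<epsilon> * l2norm h)"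

definition soft_thresh :: "(nat \<Rightarrow> real) \<Rightarrow> (nat \<Rightarrow> real) \<Rightarrow> (nat \<Rightarrow> real)" where
  "soft_thresh v u = (\<lambda>k. max 0 (\<bar>u k\<bar> - v k) * sgn (u k))"

definition grad_step ::
  "((nat \<Rightarrow> real) \<Rightarrow> 'h::real_inner) \<Rightarrow> ('h \<Rightarrow> (nat \<Rightarrow> real)) \<Rightarrow> 'h \<Rightarrow> real \<Rightarrow> (nat \<Rightarrow> real) \<Rightarrow> (nat \<Rightarrow> real)" where
  "grad_step K Kstar f \<gamma> u = (\<lambda>k. u k - \<gamma> * Kstar (K u - f) k)"

definition ssn_F ::
  "((nat \<Rightarrow> real) \<Rightarrow> 'h::real_inner) \<Rightarrow> ('h \<Rightarrow> (nat \<Rightarrow> real)) \<Rightarrow> 'h \<Rightarrow> (nat \<Rightarrow> real) \<Rightarrow> real \<Rightarrow> (nat \<Rightarrow> real) \<Rightarrow> (nat \<Rightarrow> real)" where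
  "ssn_F K Kstar f w \<gamma> u = (\<lambda>k. u k - soft_thresh (\<lambda>j. \<gamma> * w j) (grad_step K Kstar f \<gamma> u) k)"

definition active_set ::
  "((nat \<Rightarrow> real) \<Rightarrow> 'h::real_inner) \<Rightarrow> ('h \<Rightarrow> (nat \<Rightarrow> real)) \<Rightarrow> 'h \<Rightarrow> (nat \<Rightarrow> real) \<Rightarrow> real \<Rightarrow> (nat \<Rightarrow> real) \<Rightarrow> nat set" where
  "active_set K Kstar f w \<gamma> u = {k. \<bar>grad_step K Kstar f \<gamma> u k\<bar> > \<gamma> * w k}"

definition ssn_G ::
  "((nat \<Rightarrow> real) \<Rightarrow> 'h::real_inner) \<Rightarrow> ('h \<Rightarrow> (nat \<Rightarrow> real)) \<Rightarrow> 'h \<Rightarrow> (nat \<Rightarrow> real) \<Rightarrow> real \<Rightarrow> (nat \<Rightarrow> real) \<Rightarrow> (nat \<Rightarrow> real) \<Rightarrow> (nat \<Rightarrow> real)" where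
  "ssn_G K Kstar f w \<gamma> u h =
     (\<lambda>k. if k \<in> active_set K Kstar f w \<gamma> u then \<gamma> * Kstar (K h) k else h k)"

end

theory Submission
  imports Defs
begin

text \<open>Put \<open>z = u - \<gamma> K\<^sup>*(Ku - f)\<close> and \<open>d = h - \<gamma> K\<^sup>*K h\<close>, so that the argument of the
  soft thresholding at \<open>u + h\<close> is \<open>z + d\<close>. Scalar soft thresholding with threshold \<open>t > 0\<close>
  is affine on each of the three pieces \<open>x < -t\<close>, \<open>\<bar>x\<bar> \<le> t\<close>, \<open>x > t\<close>, and its increment
  from \<open>z\<close> to \<open>z + d\<close> equals its slope at \<open>z + d\<close> times \<open>d\<close> as soon as \<open>\<bar>d\<bar>\<close> is below a
  margin that depends only on the distance of \<open>\<bar>z\<bar>\<close> to \<open>t\<close>. Since \<open>z \<in> \<ell>\<^sup>2\<close> and all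
  thresholds \<open>\<gamma> w\<^sub>k\<close> are at least \<open>\<gamma> w\<^sub>0 > 0\<close>, only finitely many coordinates come near
  their threshold, so these margins have a positive infimum. The coordinates of \<open>d\<close> are
  bounded by a multiple of \<open>\<parallel>h\<parallel>\<close>, hence for small \<open>h\<close> the Newton residual
  \<open>F(u+h) - F(u) - G(u+h)h\<close> vanishes identically.\<close>

lemma square_le_twice_sum_squares:
  fixes a b c :: real
  assumes "\<bar>a\<bar> \<le> \<bar>b\<bar> + \<bar>c\<bar>"
  shows "a\<^sup>2 \<le> 2 * b\<^sup>2 + 2 * c\<^sup>2"
proof -
  have "a\<^sup>2 \<le> (\<bar>b\<bar> + \<bar>c\<bar>)\<^sup>2"
    using assms by (metis abs_ge_zero power2_abs power_mono)
  also have "\<dots> \<le> 2 * b\<^sup>2 + 2 * c\<^sup>2"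
    using zero_le_power2[of "\<bar>b\<bar> - \<bar>c\<bar>"] by (simp add: power2_eq_square algebra_simps)
  finally show ?thesis .
qed

lemma l2_dominated:
  assumes "b \<in> l2" "c \<in> l2" "\<And>k. \<bar>a k\<bar> \<le> \<bar>b k\<bar> + \<bar>c k\<bar>"
  shows "a \<in> l2"
proof -
  have "summable (\<lambda>k. 2 * (b k)\<^sup>2 + 2 * (c k)\<^sup>2)"
    using assms(1,2) by (intro summable_add summable_mult) (auto simp: l2_def)
  then show ?thesis
    unfolding l2_def
    using square_le_twice_sum_squares[OF assms(3)] by (auto intro: summable_comparison_test')
qed

lemma l2norm_dominated:
  assumes "b \<in> l2" "c \<in> l2" "\<And>k. \<bar>a k\<bar> \<le> \<bar>b k\<bar> + \<bar>c k\<bar>"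
  shows "l2norm a \<le> sqrt 2 * (l2norm b + l2norm c)"
proof -
  define B where "B = (\<Sum>k. (b k)\<^sup>2)"
  define C where "C = (\<Sum>k. (c k)\<^sup>2)"
  have sb: "summable (\<lambda>k. (b k)\<^sup>2)" and sc: "summable (\<lambda>k. (c k)\<^sup>2)"
    using assms(1,2) by (auto simp: l2_def)
  have "B \<ge> 0" "C \<ge> 0"
    using sb sc by (auto simp: B_def C_def intro: suminf_nonneg)
  have "(\<Sum>k. (a k)\<^sup>2) \<le> (\<Sum>k. 2 * (b k)\<^sup>2 + 2 * (c k)\<^sup>2)"
    using l2_dominated[OF assms] square_le_twice_sum_squares[OF assms(3)] sb sc
    by (intro suminf_le) (auto simp: l2_def intro!: summable_add summable_mult)
  also have "\<dots> = 2 * B + 2 * C"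
    using sb sc by (simp add: B_def C_def suminf_add[symmetric] suminf_mult summable_mult)
  finally have "l2norm a \<le> sqrt (2 * B + 2 * C)"
    unfolding l2norm_def by simp
  also have "\<dots> \<le> sqrt 2 * (sqrt B + sqrt C)"
    using \<open>B \<ge> 0\<close> \<open>C \<ge> 0\<close>
    by (metis distrib_left_numeral mult_left_mono real_sqrt_ge_0_iff
        real_sqrt_mult sqrt_add_le_add_sqrt zero_le_numeral)
  finally show ?thesis
    by (simp add: l2norm_def B_def C_def)
qed

lemma l2_scale: "x \<in> l2 \<Longrightarrow> (\<lambda>k. c * x k) \<in> l2"
  unfolding l2_def by (simp add: power_mult_distrib summable_mult)

lemma l2norm_scale: "x \<in> l2 \<Longrightarrow> l2norm (\<lambda>k. c * x k) = \<bar>c\<bar> * l2norm x"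
  unfolding l2norm_def l2_def by (simp add: power_mult_distrib suminf_mult real_sqrt_mult)

lemma l2norm_nonneg: "x \<in> l2 \<Longrightarrow> 0 \<le> l2norm x"
  unfolding l2norm_def l2_def by (auto intro: suminf_nonneg)

lemma l2norm_zero: "l2norm (\<lambda>k. 0) = 0"
  by (simp add: l2norm_def)

lemma abs_le_l2norm:
  assumes "x \<in> l2"
  shows "\<bar>x k\<bar> \<le> l2norm x"
proof -
  have "(\<Sum>j\<in>{k}. (x j)\<^sup>2) \<le> (\<Sum>j. (x j)\<^sup>2)"
    using assms by (intro sum_le_suminf) (auto simp: l2_def)
  then have "(x k)\<^sup>2 \<le> (\<Sum>j. (x j)\<^sup>2)"
    by simp
  then show ?thesis
    unfolding l2norm_def by (metis real_sqrt_abs real_sqrt_le_mono)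
qed

definition unit_seq :: "nat \<Rightarrow> nat \<Rightarrow> real" where
  "unit_seq j = (\<lambda>k. if k = j then 1 else 0)"

lemma unit_seq_in_l2: "unit_seq j \<in> l2"
  unfolding l2_def unit_seq_def mem_Collect_eq by (rule summable_finite[of "{j}"]) auto

lemma is_adjoint_l2_coordinate:
  assumes "is_adjoint_l2 K Kstar"
  shows "Kstar y j = inner (K (unit_seq j)) y"
proof -
  have "inner (K (unit_seq j)) y = (\<Sum>k. unit_seq j k * Kstar y k)"
    using assms unit_seq_in_l2 by (simp add: is_adjoint_l2_def)
  also have "\<dots> = (\<Sum>k\<in>{j}. unit_seq j k * Kstar y k)"
    by (rule suminf_finite) (auto simp: unit_seq_def)
  finally show ?thesis
    by (simp add: unit_seq_def)
qed

lemma is_adjoint_l2_linear: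
  assumes "is_adjoint_l2 K Kstar"
  shows "Kstar (y + z) = (\<lambda>k. Kstar y k + Kstar z k)"
    and "Kstar (c *\<^sub>R y) = (\<lambda>k. c * Kstar y k)"
  by (simp_all add: fun_eq_iff is_adjoint_l2_coordinate[OF assms] inner_add_right)

text \<open>Testing \<open>K\<^sup>* y\<close> against its own truncations \<open>x\<close> to \<open>{..<n}\<close> gives
  \<open>\<parallel>x\<parallel>\<^sup>2 = \<langle>K x, y\<rangle> \<le> C \<parallel>x\<parallel> \<parallel>y\<parallel>\<close>, i.e. a uniform bound on the partial sums.\<close>

lemma is_adjoint_l2_norm_bound:
  assumes adj: "is_adjoint_l2 K Kstar"
    and K_bound: "\<And>x. x \<in> l2 \<Longrightarrow> norm (K x) \<le> C * l2norm x" and "0 \<le> C"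
  shows "l2norm (Kstar y) \<le> C * norm y"
proof -
  define v where "v = Kstar y"
  have partial_sum_bound: "(\<Sum>k<n. (v k)\<^sup>2) \<le> (C * norm y)\<^sup>2" for n
  proof -
    define x where "x = (\<lambda>k. if k < n then v k else 0)"
    define S where "S = (\<Sum>k<n. (v k)\<^sup>2)"
    have "x \<in> l2"
      unfolding l2_def x_def mem_Collect_eq by (rule summable_finite[of "{..<n}"]) auto
    have "S \<ge> 0"
      by (simp add: S_def sum_nonneg)
    have "(\<Sum>k. x k * v k) = (\<Sum>k<n. x k * v k)" "(\<Sum>k. (x k)\<^sup>2) = (\<Sum>k<n. (x k)\<^sup>2)"
      by (rule suminf_finite; auto simp: x_def)+
    then have sum_xv: "(\<Sum>k. x k * v k) = S" and norm_x: "l2norm x = sqrt S"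
      by (simp_all add: x_def S_def l2norm_def power2_eq_square)
    have "S = inner (K x) y"
      using adj \<open>x \<in> l2\<close> sum_xv by (simp add: is_adjoint_l2_def v_def)
    also have "\<dots> \<le> norm (K x) * norm y"
      by (rule norm_cauchy_schwarz)
    also have "\<dots> \<le> (C * sqrt S) * norm y"
      using K_bound[OF \<open>x \<in> l2\<close>] norm_x by (simp add: mult_right_mono)
    also have "\<dots> = (C * norm y) * sqrt S"
      by simp
    finally have "sqrt S \<le> C * norm y"
      using \<open>S \<ge> 0\<close> \<open>0 \<le> C\<close>
      by (smt (verit, best) divide_right_mono eq_divide_imp real_div_sqrt norm_ge_zero
          zero_le_mult_iff)
    then show ?thesis
      using \<open>S \<ge> 0\<close> by (metis S_def power_mono real_sqrt_ge_zero real_sqrt_pow2)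
  qed
  have "(\<Sum>k. (v k)\<^sup>2) \<le> (C * norm y)\<^sup>2"
    using adj partial_sum_bound by (intro suminf_le_const) (auto simp: is_adjoint_l2_def l2_def v_def)
  then have "sqrt (\<Sum>k. (v k)\<^sup>2) \<le> sqrt ((C * norm y)\<^sup>2)"
    using real_sqrt_le_mono by blast
  then show ?thesis
    using \<open>0 \<le> C\<close> by (simp add: l2norm_def v_def)
qed

definition soft_threshold :: "real \<Rightarrow> real \<Rightarrow> real" where
  "soft_threshold t x = max 0 (\<bar>x\<bar> - t) * sgn x"

lemma soft_thresh_eq: "soft_thresh v u k = soft_threshold (v k) (u k)"
  by (simp add: soft_thresh_def soft_threshold_def)

lemma abs_soft_threshold_le: "0 \<le> t \<Longrightarrow> \<bar>soft_threshold t x\<bar> \<le> \<bar>x\<bar>"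
  by (auto simp: soft_threshold_def sgn_if abs_if)

text \<open>At \<open>\<bar>z\<bar> = t\<close> the margin is \<open>t\<close>, not \<open>0\<close>: there soft thresholding has a kink, but
  its increment still equals the slope at the perturbed point times \<open>d\<close>.\<close>

definition threshold_margin :: "real \<Rightarrow> real \<Rightarrow> real" where
  "threshold_margin t z = (if \<bar>z\<bar> = t then t else \<bar>\<bar>z\<bar> - t\<bar>)"

lemma soft_threshold_increment:
  assumes "0 < t" and "\<bar>d\<bar> < threshold_margin t z"
  shows "soft_threshold t (z + d) - soft_threshold t z = (if t < \<bar>z + d\<bar> then d else 0)"
  using assms by (auto simp: soft_threshold_def threshold_margin_def sgn_if abs_if split: if_splits)

lemma l2_threshold_margin_uniform:
  assumes "z \<in> l2" and "0 < t0" and t_ge: "\<And>k. t0 \<le> t k"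
  obtains \<delta> where "0 < \<delta>" and "\<And>k. \<delta> \<le> threshold_margin (t k) (z k)"
proof -
  define near where "near = {k. t0 / 2 \<le> \<bar>z k\<bar>}"
  have "(\<lambda>k. (z k)\<^sup>2) \<longlonglongrightarrow> 0"
    using assms(1) by (intro summable_LIMSEQ_zero) (simp add: l2_def)
  then have "eventually (\<lambda>k. (z k)\<^sup>2 < (t0 / 2)\<^sup>2) sequentially"
    by (rule order_tendstoD(2)) (use \<open>0 < t0\<close> in simp)
  then obtain N where N: "\<And>k. N \<le> k \<Longrightarrow> \<bar>z k\<bar>\<^sup>2 < (t0 / 2)\<^sup>2"
    by (auto simp: eventually_sequentially)
  have "near \<subseteq> {..<N}"
  proof
    fix k assume "k \<in> near"
    show "k \<in> {..<N}"
    proof (rule ccontr)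
      assume "k \<notin> {..<N}"
      then have "\<bar>z k\<bar>\<^sup>2 < (t0 / 2)\<^sup>2"
        using N by simp
      then have "\<bar>z k\<bar> < t0 / 2"
        by (rule power2_less_imp_less) (use \<open>0 < t0\<close> in simp)
      then show False
        using \<open>k \<in> near\<close> by (simp add: near_def)
    qed
  qed
  then have "finite near"
    by (rule finite_subset) simp
  have margin_pos: "0 < threshold_margin (t k) (z k)" for k
    using t_ge[of k] \<open>0 < t0\<close> by (auto simp: threshold_margin_def)
  define \<delta> where "\<delta> = Min (insert (t0 / 2) ((\<lambda>k. threshold_margin (t k) (z k)) ` near))"
  show ?thesis
  proof
    show "0 < \<delta>"
      unfolding \<delta>_def using \<open>finite near\<close> \<open>0 < t0\<close> margin_pos by (subst Min_gr_iff) auto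
    show "\<delta> \<le> threshold_margin (t k) (z k)" for k
    proof (cases "k \<in> near")
      case True
      then show ?thesis
        unfolding \<delta>_def using \<open>finite near\<close> by (intro Min_le) auto
    next
      case False
      then have "t0 / 2 \<le> threshold_margin (t k) (z k)"
        using t_ge[of k] by (auto simp: near_def threshold_margin_def)
      moreover have "\<delta> \<le> t0 / 2"
        unfolding \<delta>_def using \<open>finite near\<close> by (intro Min_le) auto
      ultimately show ?thesis
        by linarith
    qed
  qed
qed

locale ssn_problem =
  fixes K :: "(nat \<Rightarrow> real) \<Rightarrow> 'h::real_inner"
    and Kstar :: "'h \<Rightarrow> (nat \<Rightarrow> real)"
    and f :: 'h and w :: "nat \<Rightarrow> real" and w0 \<gamma> C :: real
  assumes K_add: "\<And>x y. x \<in> l2 \<Longrightarrow> y \<in> l2 \<Longrightarrow> K (\<lambda>k. x k + y k) = K x + K y"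
    and K_scale: "\<And>c x. x \<in> l2 \<Longrightarrow> K (\<lambda>k. c * x k) = c *\<^sub>R K x"
    and K_bound: "\<And>x. x \<in> l2 \<Longrightarrow> norm (K x) \<le> C * l2norm x"
    and C_nonneg: "0 \<le> C"
    and adjoint: "is_adjoint_l2 K Kstar"
    and w0_pos: "0 < w0" and w_ge: "\<And>k. w0 \<le> w k"
    and gamma_pos: "0 < \<gamma>"
begin

lemma Kstar_in_l2: "Kstar y \<in> l2"
  using adjoint by (simp add: is_adjoint_l2_def)

lemma Kstar_norm_bound: "l2norm (Kstar y) \<le> C * norm y"
  using is_adjoint_l2_norm_bound[OF adjoint K_bound C_nonneg] .

lemma KstarK_coordinate_bound:
  assumes "h \<in> l2"
  shows "\<bar>Kstar (K h) k\<bar> \<le> C * C * l2norm h"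
proof -
  have "\<bar>Kstar (K h) k\<bar> \<le> C * norm (K h)"
    using abs_le_l2norm[OF Kstar_in_l2] Kstar_norm_bound by (rule order_trans)
  also have "\<dots> \<le> C * (C * l2norm h)"
    using K_bound[OF assms] C_nonneg by (rule mult_left_mono)
  finally show ?thesis
    by simp
qed

lemma grad_step_in_l2: "u \<in> l2 \<Longrightarrow> grad_step K Kstar f \<gamma> u \<in> l2"
  unfolding grad_step_def
  by (rule l2_dominated[OF _ l2_scale[OF Kstar_in_l2, of \<gamma> "K u - f"]]) auto

lemma grad_step_add:
  assumes "u \<in> l2" "h \<in> l2"
  shows "grad_step K Kstar f \<gamma> (\<lambda>j. u j + h j) k
      = grad_step K Kstar f \<gamma> u k + (h k - \<gamma> * Kstar (K h) k)"
proof -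
  have "Kstar (K (\<lambda>j. u j + h j) - f) = Kstar ((K u - f) + K h)"
    using K_add[OF assms] by (simp add: algebra_simps)
  also have "\<dots> = (\<lambda>k. Kstar (K u - f) k + Kstar (K h) k)"
    by (rule is_adjoint_l2_linear(1)[OF adjoint])
  finally show ?thesis
    by (simp add: grad_step_def algebra_simps)
qed

lemma ssn_F_in_l2:
  assumes "u \<in> l2"
  shows "ssn_F K Kstar f w \<gamma> u \<in> l2"
  unfolding ssn_F_def soft_thresh_eq
proof (rule l2_dominated[OF assms grad_step_in_l2[OF assms]])
  fix k
  have "0 \<le> \<gamma> * w k"
    using w0_pos w_ge[of k] gamma_pos by simp
  then show "\<bar>u k - soft_threshold (\<gamma> * w k) (grad_step K Kstar f \<gamma> u k)\<bar>
      \<le> \<bar>u k\<bar> + \<bar>grad_step K Kstar f \<gamma> u k\<bar>"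
    using abs_soft_threshold_le[of "\<gamma> * w k" "grad_step K Kstar f \<gamma> u k"]
      abs_triangle_ineq4[of "u k" "soft_threshold (\<gamma> * w k) (grad_step K Kstar f \<gamma> u k)"]
    by linarith
qed

lemma partial_KstarK_bounded_linear:
  "bounded_linear_l2 (\<lambda>h k. if k \<in> A then \<gamma> * Kstar (K h) k else h k)"
proof -
  have dominated: "\<bar>if k \<in> A then \<gamma> * Kstar (K h) k else h k\<bar> \<le> \<bar>h k\<bar> + \<bar>\<gamma> * Kstar (K h) k\<bar>"
    for h k
    by auto
  have norm_bound: "l2norm (\<lambda>k. if k \<in> A then \<gamma> * Kstar (K x) k else x k)
      \<le> (sqrt 2 * (1 + \<gamma> * C * C)) * l2norm x" if "x \<in> l2" for x
  proof -
    have "l2norm (\<lambda>k. if k \<in> A then \<gamma> * Kstar (K x) k else x k)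
        \<le> sqrt 2 * (l2norm x + l2norm (\<lambda>k. \<gamma> * Kstar (K x) k))"
      using l2norm_dominated[OF that l2_scale[OF Kstar_in_l2] dominated] .
    also have "l2norm (\<lambda>k. \<gamma> * Kstar (K x) k) \<le> \<gamma> * (C * (C * l2norm x))"
      using l2norm_scale[OF Kstar_in_l2] gamma_pos Kstar_norm_bound[of "K x"]
        K_bound[OF that] C_nonneg
      by (auto intro!: mult_left_mono intro: order_trans)
    also have "sqrt 2 * (l2norm x + \<gamma> * (C * (C * l2norm x)))
        = (sqrt 2 * (1 + \<gamma> * C * C)) * l2norm x"
      by (simp add: algebra_simps)
    finally show ?thesis
      by simp
  qed
  show ?thesis
    unfolding bounded_linear_l2_def
    using l2_dominated[OF _ l2_scale[OF Kstar_in_l2] dominated] norm_bound K_add K_scale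
    by (intro conjI ballI allI exI[of _ "sqrt 2 * (1 + \<gamma> * C * C)"])
      (auto simp: fun_eq_iff is_adjoint_l2_linear[OF adjoint] algebra_simps)
qed

lemma ssn_G_bounded_linear: "bounded_linear_l2 (ssn_G K Kstar f w \<gamma> v)"
  using partial_KstarK_bounded_linear[of "active_set K Kstar f w \<gamma> v"]
  by (simp add: ssn_G_def[abs_def])

lemma ssn_residual_vanishes:
  assumes "u \<in> l2"
  obtains \<delta> where "0 < \<delta>"
    and "\<And>h. h \<in> l2 \<Longrightarrow> l2norm h < \<delta> \<Longrightarrow>
      (\<lambda>k. ssn_F K Kstar f w \<gamma> (\<lambda>j. u j + h j) k - ssn_F K Kstar f w \<gamma> u k
         - ssn_G K Kstar f w \<gamma> (\<lambda>j. u j + h j) h k) = (\<lambda>k. 0)"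
proof -
  define z where "z = grad_step K Kstar f \<gamma> u"
  have "z \<in> l2"
    unfolding z_def using grad_step_in_l2[OF assms] .
  have "0 < \<gamma> * w0" and threshold_ge: "\<And>k. \<gamma> * w0 \<le> \<gamma> * w k"
    using gamma_pos w0_pos w_ge by auto
  obtain \<delta> where "0 < \<delta>" and margin: "\<And>k. \<delta> \<le> threshold_margin (\<gamma> * w k) (z k)"
    using l2_threshold_margin_uniform[where t = "\<lambda>k. \<gamma> * w k", OF \<open>z \<in> l2\<close> \<open>0 < \<gamma> * w0\<close>]
      threshold_ge by metis
  define M where "M = 1 + \<gamma> * C * C"
  have "0 < M"
    using gamma_pos C_nonneg by (simp add: M_def add_pos_nonneg)
  show ?thesis
  proof
    show "0 < \<delta> / M"
      using \<open>0 < \<delta>\<close> \<open>0 < M\<close> by simp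
    fix h assume "h \<in> l2" and "l2norm h < \<delta> / M"
    show "(\<lambda>k. ssn_F K Kstar f w \<gamma> (\<lambda>j. u j + h j) k - ssn_F K Kstar f w \<gamma> u k
        - ssn_G K Kstar f w \<gamma> (\<lambda>j. u j + h j) h k) = (\<lambda>k. 0)"
    proof
      fix k
      define d where "d = h k - \<gamma> * Kstar (K h) k"
      have "\<bar>d\<bar> \<le> \<bar>h k\<bar> + \<gamma> * \<bar>Kstar (K h) k\<bar>"
        using abs_triangle_ineq4[of "h k" "\<gamma> * Kstar (K h) k"] gamma_pos by (simp add: d_def abs_mult)
      also have "\<dots> \<le> l2norm h + \<gamma> * (C * C * l2norm h)"
        using abs_le_l2norm[OF \<open>h \<in> l2\<close>] KstarK_coordinate_bound[OF \<open>h \<in> l2\<close>] gamma_pos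
        by (intro add_mono mult_left_mono) auto
      also have "\<dots> = M * l2norm h"
        by (simp add: M_def algebra_simps)
      also have "\<dots> < \<delta>"
        using \<open>l2norm h < \<delta> / M\<close> \<open>0 < M\<close> by (simp add: field_simps)
      finally have "\<bar>d\<bar> < threshold_margin (\<gamma> * w k) (z k)"
        using margin[of k] by linarith
      then have "soft_threshold (\<gamma> * w k) (z k + d) - soft_threshold (\<gamma> * w k) (z k)
          = (if \<gamma> * w k < \<bar>z k + d\<bar> then d else 0)"
        using \<open>0 < \<gamma> * w0\<close> threshold_ge[of k] by (intro soft_threshold_increment) auto
      moreover have "grad_step K Kstar f \<gamma> (\<lambda>j. u j + h j) k = z k + d"
        unfolding z_def d_def by (rule grad_step_add[OF assms \<open>h \<in> l2\<close>])
      ultimately show "ssn_F K Kstar f w \<gamma> (\<lambda>j. u j + h j) k - ssn_F K Kstar f w \<gamma> u k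
          - ssn_G K Kstar f w \<gamma> (\<lambda>j. u j + h j) h k = 0"
        by (simp add: ssn_F_def ssn_G_def active_set_def soft_thresh_eq z_def[symmetric])
          (auto simp: d_def split: if_splits)
    qed
  qed
qed

end

theorem proposition3p7:
  fixes K :: "(nat \<Rightarrow> real) \<Rightarrow> 'h::{real_inner, complete_space}"
    and Kstar :: "'h \<Rightarrow> (nat \<Rightarrow> real)"
    and f :: 'h and w :: "nat \<Rightarrow> real" and w0 \<gamma> :: real
  assumes "bounded_linear_from_l2 K"
    and "is_adjoint_l2 K Kstar"
    and "w0 > 0" and "\<And>k. w k \<ge> w0"
    and "\<gamma> > 0"
  shows "newton_differentiable_l2 (ssn_F K Kstar f w \<gamma>) (ssn_G K Kstar f w \<gamma>)"
proof -
  obtain C where C: "\<And>x. x \<in> l2 \<Longrightarrow> norm (K x) \<le> C * l2norm x"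
    using assms(1) unfolding bounded_linear_from_l2_def by blast
  have C': "norm (K x) \<le> max C 0 * l2norm x" if "x \<in> l2" for x
    using C[OF that] mult_right_mono[OF max.cobounded1 l2norm_nonneg[OF that]] by (rule order_trans)
  interpret ssn_problem K Kstar f w w0 \<gamma> "max C 0"
    using assms C' unfolding bounded_linear_from_l2_def by unfold_locales auto
  show ?thesis
    unfolding newton_differentiable_l2_def
  proof (intro conjI ballI allI impI)
    show "ssn_F K Kstar f w \<gamma> u \<in> l2" if "u \<in> l2" for u
      using ssn_F_in_l2[OF that] .
    show "bounded_linear_l2 (ssn_G K Kstar f w \<gamma> v)" for v
      by (rule ssn_G_bounded_linear)
    fix u :: "nat \<Rightarrow> real" and \<epsilon> :: real
    assume "u \<in> l2" "0 < \<epsilon>"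
    obtain \<delta> where "0 < \<delta>" and residual: "\<And>h. h \<in> l2 \<Longrightarrow> l2norm h < \<delta> \<Longrightarrow>
        (\<lambda>k. ssn_F K Kstar f w \<gamma> (\<lambda>j. u j + h j) k - ssn_F K Kstar f w \<gamma> u k
           - ssn_G K Kstar f w \<gamma> (\<lambda>j. u j + h j) h k) = (\<lambda>k. 0)"
      using ssn_residual_vanishes[OF \<open>u \<in> l2\<close>] by blast
    show "\<exists>\<delta>>0. \<forall>h\<in>l2. 0 < l2norm h \<and> l2norm h < \<delta> \<longrightarrow>
        l2norm (\<lambda>k. ssn_F K Kstar f w \<gamma> (\<lambda>j. u j + h j) k - ssn_F K Kstar f w \<gamma> u k
           - ssn_G K Kstar f w \<gamma> (\<lambda>j. u j + h j) h k) \<le> \<epsilon> * l2norm h"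
      using \<open>0 < \<delta>\<close> \<open>0 < \<epsilon>\<close> by (intro exI[of _ \<delta>]) (simp add: residual l2norm_zero)
  qed
qed

end
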